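(* For every graph $G$ with at least one vertex, $$\chi'_{\rm ocf}(G)\le\chi'_{\rm cf}(G)\le 3\lceil\log_2\chi(G)\rceil+17<3\log_2\chi(G)+20.$$
   Context: For an edge $e=uv$ of $G=(V,E)$, $E[e]$ is the set of edges incident with $u$ or $v$, $E(e)=E[e]\setminus\{e\}$; $e$ is isolated if $E(e)=\emptyset$. For an edge colouring $c$, a colour $\alpha$ is unique for $e$ if $\alpha$ appears on some edge $e'\in E(e)$ and on no other edge of $E[e]\setminus\{e'\}$; $e$ is satisfied if such a colour exists. A colouring of all edges is conflict-free if every non-isolated edge is satisfied; $\chi'_{\rm cf}(G)$ is the minimum number of colours in such a colouring. $\chi'_{\rm ocf}(G)$ is the minimum number of colours in an edge colouring such that for every edge $e$ with $E(e)\neq\emptyset$ some colour is assigned to exactly one edge of $E(e)$. $\chi(G)$ is the chromatic number. *)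

theory Defs
  imports Complex_Main
begin

definition graph :: "'a set \<Rightarrow> 'a set set \<Rightarrow> bool" where
  "graph V E \<longleftrightarrow> finite V \<and> (\<forall>e\<in>E. \<exists>u v. u \<noteq> v \<and> u \<in> V \<and> v \<in> V \<and> e = {u, v})"

definition closed_edge_nbhd :: "'a set set \<Rightarrow> 'a set \<Rightarrow> 'a set set" where
  "closed_edge_nbhd E e = {f \<in> E. f \<inter> e \<noteq> {}}"

definition open_edge_nbhd :: "'a set set \<Rightarrow> 'a set \<Rightarrow> 'a set set" where
  "open_edge_nbhd E e = closed_edge_nbhd E e - {e}"

definition isolated_edge :: "'a set set \<Rightarrow> 'a set \<Rightarrow> bool" where
  "isolated_edge E e \<longleftrightarrow> open_edge_nbhd E e = {}"

definition satisfied :: "'a set set \<Rightarrow> ('a set \<Rightarrow> nat) \<Rightarrow> 'a set \<Rightarrow> bool" where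
  "satisfied E c e \<longleftrightarrow> (\<exists>e'\<in>open_edge_nbhd E e.
      \<forall>e''\<in>closed_edge_nbhd E e - {e'}. c e'' \<noteq> c e')"

definition conflict_free :: "'a set set \<Rightarrow> ('a set \<Rightarrow> nat) \<Rightarrow> bool" where
  "conflict_free E c \<longleftrightarrow> (\<forall>e\<in>E. \<not> isolated_edge E e \<longrightarrow> satisfied E c e)"

definition open_conflict_free :: "'a set set \<Rightarrow> ('a set \<Rightarrow> nat) \<Rightarrow> bool" where
  "open_conflict_free E c \<longleftrightarrow> (\<forall>e\<in>E. open_edge_nbhd E e \<noteq> {} \<longrightarrow>
      (\<exists>e'\<in>open_edge_nbhd E e. \<forall>e''\<in>open_edge_nbhd E e - {e'}. c e'' \<noteq> c e'))"

definition chi_cf :: "'a set set \<Rightarrow> nat" where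
  "chi_cf E = (LEAST k. \<exists>c. (\<forall>e\<in>E. c e < k) \<and> conflict_free E c)"

definition chi_ocf :: "'a set set \<Rightarrow> nat" where
  "chi_ocf E = (LEAST k. \<exists>c. (\<forall>e\<in>E. c e < k) \<and> open_conflict_free E c)"

definition chromatic_number :: "'a set \<Rightarrow> 'a set set \<Rightarrow> nat" where
  "chromatic_number V E = (LEAST k. \<exists>f. (\<forall>v\<in>V. f v < k) \<and>
      (\<forall>u v. {u, v} \<in> E \<longrightarrow> f u \<noteq> f v))"

end

theory Submission
  imports Defs
begin

text \<open>Fix a Grundy colouring \<open>f\<close> with \<open>\<chi>\<close> colours, so that a vertex of colour \<open>g\<close> has
  neighbours of all colours below \<open>g\<close>, and let \<open>M = \<lceil>log\<^sub>2 \<chi>\<rceil>\<close>. The colours \<open>g \<ge> 2\<close> are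
  grouped into families: for each \<open>j < M\<close> those with bit \<open>j\<close> set in \<open>g - 1\<close>, and the
  singletons \<open>{spike j}\<close>. A vertex \<open>y\<close> whose colour lies in a family \<open>t\<close> has a neighbour of a
  colour \<open>base t\<close> below and outside the family; the edge to it, the anchor edge, is coloured
  according to \<open>t\<close> alone. For an edge \<open>xy\<close> with \<open>f y \<ge> 2\<close> some family contains the colour
  of one endpoint but neither the colour of the other nor the family's base, and the anchor
  edge of the first endpoint is then the only edge of its colour around \<open>xy\<close>. Edges between
  colours 0 and 1 are coloured by depth modulo 3 in a breadth-first search forest of the
  subgraph they span, with two further colours at the roots; such an edge meeting no other one
  is served by a designated anchor edge or by a hook. Altogether \<open>3 M + 8\<close> colours suffice.\<close>

section \<open>Separating families of colours\<close>

lemma bit_imp_two_pow_le: "bit (n::nat) i \<Longrightarrow> 2 ^ i \<le> n"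
proof (rule ccontr)
  assume "bit n i" and "\<not> 2 ^ i \<le> n"
  then show False by (simp add: bit_iff_odd)
qed

lemma not_bit_self: "\<not> bit (j::nat) j"
  using bit_imp_two_pow_le[of j j] less_exp[of j] by linarith

lemma bit_add_two_pow_self: "bit ((j::nat) + 2 ^ j) i \<longleftrightarrow> bit j i \<or> i = j"
proof -
  have "set_bit j j = j + 2 ^ j"
    using set_bit_eq[of j j] not_bit_self[of j] by simp
  moreover have "bit (set_bit j j) i \<longleftrightarrow> bit j i \<or> i = j"
    by (auto simp: bit_set_bit_iff possible_bit_def)
  ultimately show ?thesis by simp
qed

lemma odd_imp_high_bit: "odd (n::nat) \<Longrightarrow> n \<noteq> 1 \<Longrightarrow> \<exists>i\<ge>1. bit n i"
proof -
  assume "odd n" "n \<noteq> 1"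
  then have "n div 2 \<noteq> 0" using odd_pos by fastforce
  then obtain i where "bit (n div 2) i" using bit_eq_iff[of "n div 2" 0] by auto
  then show ?thesis by (intro exI[of _ "Suc i"]) (simp add: bit_Suc)
qed

lemma bit_imp_less_of_less_two_pow: "(n::nat) < 2 ^ M \<Longrightarrow> bit n i \<Longrightarrow> i < M"
  using bit_imp_two_pow_le[of n i] by (meson le_less_trans nat_power_less_imp_less zero_less_numeral)

datatype family = Bit nat | Spike nat

text \<open>\<open>spike j\<close> is the colour that no \<open>Bit\<close> family separates from \<open>j + 1\<close> (from 0 if \<open>j = 0\<close>).\<close>

definition spike :: "nat \<Rightarrow> nat" where
  "spike j = (if j = 0 then 2 else j + 1 + 2 ^ j)"

fun in_family :: "family \<Rightarrow> nat \<Rightarrow> bool" where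
  "in_family (Bit j) g \<longleftrightarrow> 2 \<le> g \<and> bit (g - 1) j"
| "in_family (Spike j) g \<longleftrightarrow> g = spike j"

fun base :: "family \<Rightarrow> nat" where
  "base (Bit j) = (if j = 0 then 0 else j + 1)"
| "base (Spike j) = 1"

definition separates :: "family \<Rightarrow> nat \<Rightarrow> nat \<Rightarrow> bool" where
  "separates t h g \<longleftrightarrow> in_family t h \<and> \<not> in_family t g \<and> g \<noteq> base t"

lemma strict_mono_spike: "strict_mono spike"
  unfolding strict_mono_Suc_iff by (simp add: spike_def)

lemma two_pow_less_spike: "2 ^ j < spike j"
  by (simp add: spike_def)

lemma in_family_imp_ge_2: "in_family t g \<Longrightarrow> 2 \<le> g"
  by (cases t) (auto simp: spike_def)

lemma base_less: "in_family t g \<Longrightarrow> base t < g"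
proof (cases t)
  case (Bit j)
  assume "in_family t g"
  then have "2 \<le> g" "2 ^ j \<le> g - 1"
    using Bit bit_imp_two_pow_le by auto
  moreover have "j < 2 ^ j" by (rule less_exp)
  ultimately have "j + 1 < g" by linarith
  then show ?thesis using Bit \<open>2 \<le> g\<close> by auto
qed (auto simp: spike_def)

lemma base_not_in_family: "\<not> in_family t (base t)"
  by (cases t) (auto simp: not_bit_self spike_def)

lemma family_eqI:
  assumes "in_family t g" "in_family t' g" "base t = base t'"
  shows "t = t'"
proof (cases t; cases t')
  fix j j' assume "t = Spike j" "t' = Spike j'"
  then show ?thesis using assms strict_mono_eq[OF strict_mono_spike, of j j'] by simp
qed (use assms(3) in \<open>simp_all split: if_splits\<close>)

lemma separating_family_at_base:
  assumes "bit (p - 1) j" "\<not> bit (z - 1) j" "base (Bit j) = z" "j \<noteq> 0" "p \<noteq> spike j"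
  shows "\<exists>t. separates t p z \<or> separates t z p"
proof -
  have z: "z - 1 = j" "2 \<le> z" using assms(3,4) by auto
  have p: "2 ^ j < p"
    using bit_imp_two_pow_le[OF assms(1)] one_le_power[of "2::nat" j] by linarith
  moreover have "(2::nat) ^ 1 \<le> 2 ^ j" using assms(4) by (intro power_increasing) auto
  ultimately have p2: "2 \<le> p" by simp
  have "p - 1 \<noteq> j + 2 ^ j" using assms(4,5) p by (auto simp: spike_def)
  then obtain i where "bit (p - 1) i \<noteq> bit (j + 2 ^ j) i"
    using bit_eq_iff by blast
  then have i: "bit (p - 1) i \<noteq> bit j i" "i \<noteq> j"
    using assms(1) bit_add_two_pow_self by auto
  show ?thesis
  proof (cases "bit (p - 1) i")
    case True
    then have "separates (Bit i) p z"
      using i p2 z by (auto simp: separates_def)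
    then show ?thesis by blast
  next
    case False
    then have "bit j i" using i by simp
    then have "i < j" using bit_imp_two_pow_le[of j i] less_exp[of i] by linarith
    moreover have "j < p" using p less_exp[of j] by linarith
    ultimately have "base (Bit i) < p" by simp
    then have "separates (Bit i) z p"
      using False \<open>bit j i\<close> z by (auto simp: separates_def)
    then show ?thesis by blast
  qed
qed

lemma separating_family_of_bit:
  assumes p: "bit (p - 1) j" and z: "\<not> bit (z - 1) j"
  shows "\<exists>t. separates t p z \<or> separates t z p"
proof -
  have p2: "2 \<le> p" using bit_imp_two_pow_le[OF p] by (cases "p - 1") auto
  consider "z \<noteq> base (Bit j)" | "z = 0" "j = 0" | "z = j + 1" "j \<noteq> 0"
    by (cases "j = 0") auto
  then show ?thesis
  proof cases
    case 1
    then have "separates (Bit j) p z" using p z p2 by (simp add: separates_def)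
    then show ?thesis by blast
  next
    case 2
    show ?thesis
    proof (cases "p = 2")
      case True
      then have "separates (Spike 0) p z" using 2 by (simp add: separates_def spike_def)
      then show ?thesis by blast
    next
      case False
      have "odd (p - 1)" "p - 1 \<noteq> 1" using p 2 False by (auto simp: bit_0)
      then obtain i where "i \<ge> 1" "bit (p - 1) i"
        using odd_imp_high_bit by blast
      then have "separates (Bit i) p z" using 2 p2 by (simp add: separates_def)
      then show ?thesis by blast
    qed
  next
    case 3
    show ?thesis
    proof (cases "p = spike j")
      case True
      then have "separates (Spike j) p z" using 3 by (simp add: separates_def spike_def)
      then show ?thesis by blast
    qed (use separating_family_at_base p z 3 in auto)
  qed
qed

lemma separating_family:
  assumes "g \<noteq> h" "2 \<le> h"
  shows "\<exists>t. separates t h g \<or> separates t g h"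
proof -
  have "g - 1 \<noteq> h - 1" using assms by linarith
  then obtain j where "bit (g - 1) j \<noteq> bit (h - 1) j" using bit_eq_iff by blast
  then show ?thesis
    using separating_family_of_bit[of h j g] separating_family_of_bit[of g j h] by blast
qed

section \<open>Grundy colourings\<close>

definition colouring :: "'a set \<Rightarrow> 'a set set \<Rightarrow> nat \<Rightarrow> ('a \<Rightarrow> nat) \<Rightarrow> bool" where
  "colouring V E k f \<longleftrightarrow> (\<forall>v\<in>V. f v < k) \<and> (\<forall>u v. {u, v} \<in> E \<longrightarrow> f u \<noteq> f v)"

lemma graph_edgeD:
  assumes "graph V E" "{u, v} \<in> E"
  shows "u \<noteq> v \<and> u \<in> V \<and> v \<in> V"
proof -
  obtain a b where "a \<noteq> b" "a \<in> V" "b \<in> V" "{u, v} = {a, b}"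
    using assms unfolding graph_def by blast
  then show ?thesis by (auto simp: doubleton_eq_iff)
qed

lemma graph_edgeE:
  assumes "graph V E" "e \<in> E"
  obtains u v where "u \<noteq> v" "u \<in> V" "v \<in> V" "e = {u, v}"
  using assms unfolding graph_def by blast

lemma colouring_card:
  assumes "graph V E"
  shows "\<exists>f. colouring V E (card V) f"
proof -
  obtain f where f: "bij_betw f V {0..<card V}"
    using ex_bij_betw_finite_nat assms by (auto simp: graph_def)
  have "f v < card V" if "v \<in> V" for v
    using f that by (auto simp: bij_betw_def)
  moreover have "f u \<noteq> f v" if "{u, v} \<in> E" for u v
    using f graph_edgeD[OF assms that] by (auto simp: bij_betw_def inj_on_def)
  ultimately show ?thesis unfolding colouring_def by blast
qed

lemma colouring_chromatic_number:
  assumes "graph V E"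
  shows "\<exists>f. colouring V E (chromatic_number V E) f"
proof -
  have "chromatic_number V E = (LEAST k. \<exists>f. colouring V E k f)"
    by (simp add: chromatic_number_def colouring_def)
  moreover have "\<exists>k f. colouring V E k f" using colouring_card[OF assms] by blast
  ultimately show ?thesis using LeastI_ex[of "\<lambda>k. \<exists>f. colouring V E k f"] by simp
qed

text \<open>A colouring minimising the sum of the colours is a Grundy colouring: a vertex without
  a neighbour of some smaller colour could be recoloured with it.\<close>

lemma grundy_colouring_exists:
  assumes G: "graph V E"
  shows "\<exists>f. colouring V E (chromatic_number V E) f \<and>
    (\<forall>v\<in>V. \<forall>h < f v. \<exists>w. {v, w} \<in> E \<and> f w = h)"
proof -
  let ?P = "colouring V E (chromatic_number V E)"
  let ?m = "\<lambda>f. \<Sum>v\<in>V. f v"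
  obtain f0 where "?P f0" using colouring_chromatic_number[OF G] ..
  define f where "f = arg_min ?m ?P"
  have Pf: "?P f" and min: "\<And>g. ?P g \<Longrightarrow> ?m f \<le> ?m g"
    using arg_min_nat_lemma[of ?P f0 ?m] \<open>?P f0\<close> unfolding f_def by auto
  have fin: "finite V" using G by (simp add: graph_def)
  have "\<exists>w. {v, w} \<in> E \<and> f w = h" if v: "v \<in> V" and h: "h < f v" for v h
  proof (rule ccontr)
    assume no: "\<nexists>w. {v, w} \<in> E \<and> f w = h"
    have "(f(v := h)) a \<noteq> (f(v := h)) b" if ab: "{a, b} \<in> E" for a b
    proof -
      have "{b, a} \<in> E" using ab by (simp add: insert_commute)
      then show ?thesis
        using Pf ab no graph_edgeD[OF G ab] unfolding colouring_def by auto
    qed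
    then have "?P (f(v := h))" using Pf h unfolding colouring_def by auto
    then have "?m f \<le> ?m (f(v := h))" by (rule min)
    moreover have "?m f = f v + (\<Sum>x\<in>V - {v}. f x)" "?m (f(v := h)) = h + (\<Sum>x\<in>V - {v}. f x)"
      using fin v by (simp_all add: sum.remove)
    ultimately show False using h by simp
  qed
  then show ?thesis using Pf by blast
qed

section \<open>Breadth-first search forests\<close>

locale bfs_forest =
  fixes R :: "'a \<Rightarrow> 'a \<Rightarrow> bool"
  assumes symmetric: "R x y \<Longrightarrow> R y x"
begin

definition root :: "'a \<Rightarrow> 'a" where
  "root w = (SOME r. R\<^sup>*\<^sup>* w r)"

definition depth :: "'a \<Rightarrow> nat" where
  "depth w = (LEAST n. (R ^^ n) (root w) w)"

definition parent :: "'a \<Rightarrow> 'a" where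
  "parent w = (SOME x. R x w \<and> Suc (depth x) = depth w)"

lemma rtranclp_sym: "R\<^sup>*\<^sup>* u v \<Longrightarrow> R\<^sup>*\<^sup>* v u"
proof (induction rule: rtranclp.induct)
  case (rtrancl_into_rtrancl a b c)
  then show ?case using symmetric converse_rtranclp_into_rtranclp by metis
qed simp

lemma reaches_root: "R\<^sup>*\<^sup>* w (root w)"
  unfolding root_def by (rule someI[of _ w]) simp

lemma root_eq:
  assumes "R\<^sup>*\<^sup>* u v"
  shows "root u = root v"
proof -
  have "R\<^sup>*\<^sup>* u = R\<^sup>*\<^sup>* v"
  proof
    fix r show "R\<^sup>*\<^sup>* u r = R\<^sup>*\<^sup>* v r"
      using assms rtranclp_sym[OF assms] by (meson rtranclp_trans)
  qed
  then show ?thesis unfolding root_def by simp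
qed

lemma depth_walk: "(R ^^ depth w) (root w) w"
proof -
  have "\<exists>n. (R ^^ n) (root w) w"
    using rtranclp_sym[OF reaches_root] by (simp add: rtranclp_imp_relpowp)
  then show ?thesis unfolding depth_def by (rule LeastI_ex)
qed

lemma depth_le: "(R ^^ n) (root w) w \<Longrightarrow> depth w \<le> n"
  unfolding depth_def by (rule Least_le)

lemma depth_eq_0_iff: "depth w = 0 \<longleftrightarrow> root w = w"
  using depth_walk[of w] depth_le[of 0 w] by auto

lemma depth_Suc_le:
  assumes "R x y"
  shows "depth y \<le> Suc (depth x)"
proof (rule depth_le)
  have "root y = root x" using assms by (intro root_eq[symmetric]) simp
  then show "(R ^^ Suc (depth x)) (root y) y" using depth_walk[of x] assms by auto
qed

lemma parent_spec:
  assumes "0 < depth w"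
  shows "R (parent w) w \<and> Suc (depth (parent w)) = depth w"
proof -
  obtain d where d: "depth w = Suc d" using assms by (cases "depth w") auto
  then obtain x where x: "(R ^^ d) (root w) x" "R x w" using depth_walk[of w] by auto
  moreover have "root x = root w" using x(2) by (intro root_eq) simp
  ultimately have "depth x \<le> d" using depth_le by metis
  then have "Suc (depth x) = depth w" using d depth_Suc_le[OF x(2)] by linarith
  then have "\<exists>x. R x w \<and> Suc (depth x) = depth w" using x(2) by blast
  then show ?thesis unfolding parent_def by (rule someI_ex)
qed

lemma relpowp_parity:
  fixes c :: "'a \<Rightarrow> bool"
  assumes c: "\<And>x y. R x y \<Longrightarrow> c x \<noteq> c y"
  shows "(R ^^ n) u w \<Longrightarrow> c w \<longleftrightarrow> (c u \<longleftrightarrow> even n)"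
proof (induction n arbitrary: w)
  case (Suc n)
  then obtain x where "(R ^^ n) u x" "R x w" by auto
  then show ?case using Suc.IH[of x] c[of x w] by auto
qed simp

lemma depth_adjacent_bipartite:
  fixes c :: "'a \<Rightarrow> bool"
  assumes c: "\<And>x y. R x y \<Longrightarrow> c x \<noteq> c y" and xy: "R x y"
  shows "depth y = Suc (depth x) \<or> depth x = Suc (depth y)"
proof -
  have "root x = root y" using xy by (intro root_eq) simp
  moreover have "c x \<longleftrightarrow> (c (root x) \<longleftrightarrow> even (depth x))"
    by (rule relpowp_parity[of c, OF c depth_walk])
  moreover have "c y \<longleftrightarrow> (c (root y) \<longleftrightarrow> even (depth y))"
    by (rule relpowp_parity[of c, OF c depth_walk])
  ultimately have "depth x \<noteq> depth y" using c[OF xy] by auto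
  then show ?thesis using depth_Suc_le[OF xy] depth_Suc_le[OF symmetric[OF xy]] by linarith
qed

end

section \<open>A conflict-free edge colouring\<close>

lemma satisfiedI:
  assumes "w \<in> E" "w \<inter> e \<noteq> {}" "w \<noteq> e"
    and "\<And>e'. e' \<in> E \<Longrightarrow> e' \<inter> e \<noteq> {} \<Longrightarrow> e' \<noteq> w \<Longrightarrow> c e' \<noteq> c w"
  shows "satisfied E c e"
  unfolding satisfied_def
proof (rule bexI[of _ w])
  show "w \<in> open_edge_nbhd E e"
    using assms(1-3) by (auto simp: open_edge_nbhd_def closed_edge_nbhd_def)
  show "\<forall>e'\<in>closed_edge_nbhd E e - {w}. c e' \<noteq> c w"
    using assms(4) by (auto simp: closed_edge_nbhd_def)
qed

lemma conflict_free_imp_open_conflict_free: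
  assumes "conflict_free E c"
  shows "open_conflict_free E c"
  unfolding open_conflict_free_def
proof (intro ballI impI)
  fix e assume "e \<in> E" "open_edge_nbhd E e \<noteq> {}"
  then have "satisfied E c e"
    using assms unfolding conflict_free_def isolated_edge_def by blast
  moreover have "open_edge_nbhd E e - {e'} \<subseteq> closed_edge_nbhd E e - {e'}" for e'
    unfolding open_edge_nbhd_def by blast
  ultimately show "\<exists>e'\<in>open_edge_nbhd E e. \<forall>e''\<in>open_edge_nbhd E e - {e'}. c e'' \<noteq> c e'"
    unfolding satisfied_def by blast
qed

locale grundy_colouring =
  fixes V :: "'a set" and E :: "'a set set" and f :: "'a \<Rightarrow> nat" and M :: nat
  assumes graph: "graph V E"
    and proper: "{u, v} \<in> E \<Longrightarrow> f u \<noteq> f v"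
    and less_two_pow: "v \<in> V \<Longrightarrow> f v < 2 ^ M"
    and grundy: "v \<in> V \<Longrightarrow> h < f v \<Longrightarrow> \<exists>w. {v, w} \<in> E \<and> f w = h"
begin

definition member :: "family \<Rightarrow> 'a \<Rightarrow> bool" where
  "member t x \<longleftrightarrow> x \<in> V \<and> in_family t (f x)"

definition anchor :: "family \<Rightarrow> 'a \<Rightarrow> 'a" where
  "anchor t x = (SOME y. {x, y} \<in> E \<and> f y = base t)"

definition anchor_edge :: "'a set \<Rightarrow> bool" where
  "anchor_edge e \<longleftrightarrow> (\<exists>t x. member t x \<and> e = {x, anchor t x})"

text \<open>Anchor edges of \<open>Bit 0\<close> and of \<open>Spike j\<close> end at vertices of colour 0 and 1 respectively.
  At each such vertex one of them is designated and gets a colour of its own; it serves the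
  edges between colours 0 and 1 that meet no other such edge.\<close>

definition designated :: "family \<Rightarrow> 'a \<Rightarrow> 'a" where
  "designated t a = (SOME x. member t x \<and> anchor t x = a)"

fun anchor_colour :: "family \<Rightarrow> 'a \<Rightarrow> nat" where
  "anchor_colour (Bit j) x =
    (if j = 0 \<and> x = designated (Bit 0) (anchor (Bit 0) x) then 7 else 8 + j)"
| "anchor_colour (Spike j) x =
    (if x = designated (Spike j) (anchor (Spike j) x) then 8 + M + 2 * j else 9 + M + 2 * j)"

lemma member_imp_ge_2: "member t x \<Longrightarrow> 2 \<le> f x"
  by (auto simp: member_def dest: in_family_imp_ge_2)

lemma anchor_spec:
  assumes "member t x"
  shows "{x, anchor t x} \<in> E \<and> f (anchor t x) = base t"
proof -
  have "x \<in> V" "base t < f x" using assms base_less by (auto simp: member_def)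
  then have "\<exists>y. {x, y} \<in> E \<and> f y = base t" using grundy by blast
  then show ?thesis unfolding anchor_def by (rule someI_ex)
qed

lemma f_anchor_less: "member t x \<Longrightarrow> f (anchor t x) < f x"
  using anchor_spec base_less by (simp add: member_def)

lemma anchor_edge_unique:
  assumes x: "member t x" and x': "member t' x'" and eq: "{x, anchor t x} = {x', anchor t' x'}"
  shows "t = t' \<and> x = x'"
proof (cases "x = x'")
  case True
  then have "anchor t x = anchor t' x'"
    using eq f_anchor_less[OF x] f_anchor_less[OF x'] by (auto simp: doubleton_eq_iff)
  then have "base t = base t'" using anchor_spec[OF x] anchor_spec[OF x'] by simp
  then show ?thesis using family_eqI x x' True by (auto simp: member_def)
next
  case False
  then have "x = anchor t' x'" "x' = anchor t x" using eq by (auto simp: doubleton_eq_iff)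
  then show ?thesis using f_anchor_less[OF x] f_anchor_less[OF x'] by simp
qed

lemma member_Bit_less: "member (Bit j) x \<Longrightarrow> j < M"
  using less_two_pow bit_imp_less_of_less_two_pow[of "f x - 1" M j]
  by (force simp: member_def)

lemma member_Spike_less:
  assumes "member (Spike j) x"
  shows "j < M"
proof -
  have "f x = spike j" "f x < 2 ^ M" using assms less_two_pow[of x] by (auto simp: member_def)
  then have "(2::nat) ^ j < 2 ^ M" using two_pow_less_spike[of j] by linarith
  then show ?thesis by simp
qed

lemma anchor_colour_bounds: "member t x \<Longrightarrow> 7 \<le> anchor_colour t x \<and> anchor_colour t x < 3 * M + 8"
  by (cases t) (auto dest: member_Bit_less member_Spike_less)

lemma anchor_colour_determines_family:
  assumes "member t x" "member t' x'" "anchor_colour t x = anchor_colour t' x'"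
  shows "t = t'"
  using assms
  by (cases t; cases t') (auto split: if_splits dest: member_Bit_less)

lemma anchor_colour_eq_designated:
  assumes "member t x" "member t' x'" "anchor_colour t x = anchor_colour t' x'"
    and "x' = designated t' (anchor t' x')" and "t' = Bit 0 \<or> (\<exists>j. t' = Spike j)"
  shows "t = t' \<and> x = designated t (anchor t x)"
proof -
  have "t = t'" using anchor_colour_determines_family assms(1-3) .
  then show ?thesis using assms(3-5) by (auto split: if_splits)
qed

text \<open>No family separates colours 0 and 1, so the edges joining them, the low edges, are coloured
  along a breadth-first search forest of the subgraph they span.\<close>

definition low_adj :: "'a \<Rightarrow> 'a \<Rightarrow> bool" where
  "low_adj u v \<longleftrightarrow> {u, v} \<in> E \<and> f u + f v = 1"

definition low_edge :: "'a set \<Rightarrow> bool" where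
  "low_edge e \<longleftrightarrow> (\<exists>u v. e = {u, v} \<and> low_adj u v)"

definition meets_low_edge :: "'a set \<Rightarrow> bool" where
  "meets_low_edge e \<longleftrightarrow> (\<exists>e'. low_edge e' \<and> e' \<noteq> e \<and> e' \<inter> e \<noteq> {})"

lemma low_adj_sym: "low_adj u v \<Longrightarrow> low_adj v u"
  by (simp add: low_adj_def insert_commute add.commute)

lemma low_adjD:
  assumes "low_adj u v"
  shows "{u, v} \<in> E \<and> f u \<le> 1 \<and> f v \<le> 1 \<and> f u \<noteq> f v"
proof -
  have "f u + f v = 1" using assms by (simp add: low_adj_def)
  then have "f u \<le> 1 \<and> f v \<le> 1 \<and> f u \<noteq> f v" by presburger
  then show ?thesis using assms by (simp add: low_adj_def)
qed

lemma low_edge_low_adj: "low_adj u v \<Longrightarrow> low_edge {u, v}"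
  by (auto simp: low_edge_def)

lemma meets_low_edgeI: "low_edge e' \<Longrightarrow> e' \<noteq> e \<Longrightarrow> e' \<inter> e \<noteq> {} \<Longrightarrow> meets_low_edge e"
  unfolding meets_low_edge_def by blast

sublocale low: bfs_forest low_adj
  by unfold_locales (rule low_adj_sym)

lemma low_root_eq: "low_adj u v \<Longrightarrow> low.root u = low.root v"
  by (intro low.root_eq) simp

lemma low_depth_adj:
  "low_adj x y \<Longrightarrow> low.depth y = Suc (low.depth x) \<or> low.depth x = Suc (low.depth y)"
  by (rule low.depth_adjacent_bipartite[of "\<lambda>x. f x = 0"]) (auto simp: low_adj_def)

definition edge_root :: "'a set \<Rightarrow> 'a" where
  "edge_root e = low.root (SOME z. z \<in> e)"

lemma edge_root_low_adj: "low_adj u v \<Longrightarrow> edge_root {u, v} = low.root u"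
  using someI[of "\<lambda>z. z \<in> {u, v}" u] low_root_eq[of u v] by (auto simp: edge_root_def)

lemma edge_root_meeting:
  assumes "low_edge e" "low_adj x y" "e \<inter> {x, y} \<noteq> {}"
  shows "edge_root e = low.root x"
proof -
  obtain p q where "e = {p, q}" "low_adj p q" using assms(1) by (auto simp: low_edge_def)
  then show ?thesis
    using assms(2,3) edge_root_low_adj low_root_eq[of p q] low_root_eq[of x y] by auto
qed

text \<open>Outside their intended use (\<open>r\<close> a root with a low neighbour, whose first edge meets
  another low edge) \<open>first_edge r\<close> and \<open>second_edge r\<close> are arbitrary; this is harmless, as colours
  4 and 5 stay unique among the low edges with root \<open>r\<close>.\<close>

definition first_edge :: "'a \<Rightarrow> 'a set" where
  "first_edge r = {r, SOME y. low_adj r y}"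

definition second_edge :: "'a \<Rightarrow> 'a set" where
  "second_edge r = (SOME e. low_edge e \<and> e \<noteq> first_edge r \<and> e \<inter> first_edge r \<noteq> {})"

definition tree_edge :: "'a set \<Rightarrow> bool" where
  "tree_edge e \<longleftrightarrow> (\<exists>w. 0 < low.depth w \<and> e = {low.parent w, w})"

definition low_colour :: "'a set \<Rightarrow> nat" where
  "low_colour e =
    (if e = first_edge (edge_root e) then 4
     else if e = second_edge (edge_root e) then 5
     else if tree_edge e then 1 + Max (low.depth ` e) mod 3
     else 0)"

lemma low_colour_le_5: "low_colour e \<le> 5"
proof -
  have "1 + Max (low.depth ` e) mod 3 \<le> 5"
    using mod_less_divisor[of 3 "Max (low.depth ` e)"] by linarith
  then show ?thesis by (simp add: low_colour_def)
qed

lemma low_colour_special_eq: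
  assumes "low_colour e \<in> {4, 5}" "low_colour e' = low_colour e" "edge_root e' = edge_root e"
  shows "e' = e"
  using assms by (auto simp: low_colour_def split: if_splits)

lemma Max_depth_parent_edge:
  "0 < low.depth w \<Longrightarrow> Max (low.depth ` {low.parent w, w}) = low.depth w"
  using low.parent_spec[of w] by (simp add: max_def)

lemma low_colour_parent_edge:
  assumes "0 < low.depth w" "low_colour {low.parent w, w} \<notin> {4, 5}"
  shows "low_colour {low.parent w, w} = 1 + low.depth w mod 3"
proof -
  have "tree_edge {low.parent w, w}" using assms(1) by (auto simp: tree_edge_def)
  then show ?thesis using assms Max_depth_parent_edge[OF assms(1)]
    by (auto simp: low_colour_def split: if_splits)
qed

lemma low_colour_tree_edge:
  assumes "1 \<le> low_colour e" "low_colour e \<le> 3"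
  obtains w where "0 < low.depth w" "e = {low.parent w, w}" "low_colour e = 1 + low.depth w mod 3"
proof -
  have "tree_edge e" "low_colour e = 1 + Max (low.depth ` e) mod 3"
    using assms by (auto simp: low_colour_def split: if_splits)
  then show ?thesis using that Max_depth_parent_edge by (auto simp: tree_edge_def)
qed

definition hook_for :: "'a set \<Rightarrow> 'a set \<Rightarrow> bool" where
  "hook_for e h \<longleftrightarrow> h \<in> E \<and> \<not> anchor_edge h \<and> (\<exists>p w. p \<in> e \<and> h = {p, w} \<and> 2 \<le> f w)"

definition hook :: "'a set \<Rightarrow> 'a set" where
  "hook e = (SOME h. hook_for e h)"

definition is_hook :: "'a set \<Rightarrow> bool" where
  "is_hook h \<longleftrightarrow> (\<exists>e. low_edge e \<and> \<not> meets_low_edge e \<and> hook_for e h \<and> h = hook e)"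

text \<open>Colours 1--5 go to low edges meeting other low edges, 6 to hooks and 7 upwards to anchor
  edges.\<close>

definition colour :: "'a set \<Rightarrow> nat" where
  "colour e =
    (if anchor_edge e then case_prod anchor_colour (SOME (t, x). member t x \<and> e = {x, anchor t x})
     else if low_edge e \<and> meets_low_edge e then low_colour e
     else if is_hook e then 6
     else 0)"

lemma colour_anchor_edge:
  assumes "member t x"
  shows "colour {x, anchor t x} = anchor_colour t x"
proof -
  let ?P = "\<lambda>(t', x'). member t' x' \<and> {x, anchor t x} = {x', anchor t' x'}"
  have "?P (t, x)" using assms by simp
  then have "?P (SOME p. ?P p)" by (rule someI)
  then have "(SOME p. ?P p) = (t, x)"
    using anchor_edge_unique[OF assms] by (auto split: prod.splits)
  moreover have "anchor_edge {x, anchor t x}" using assms by (auto simp: anchor_edge_def)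
  ultimately show ?thesis by (simp add: colour_def)
qed

lemma low_edge_not_anchor_edge: "low_edge e \<Longrightarrow> \<not> anchor_edge e"
  by (auto simp: low_edge_def anchor_edge_def low_adj_def doubleton_eq_iff
      dest!: member_imp_ge_2)

lemma colour_anchor_edge_ge_7: "anchor_edge e \<Longrightarrow> 7 \<le> colour e"
  using colour_anchor_edge anchor_colour_bounds by (force simp: anchor_edge_def)

lemma colour_not_anchor_edge: "\<not> anchor_edge e \<Longrightarrow> colour e \<le> 6"
  using low_colour_le_5[of e] by (simp add: colour_def)

lemma colour_linked: "low_edge e \<Longrightarrow> meets_low_edge e \<Longrightarrow> colour e = low_colour e"
  using low_edge_not_anchor_edge by (simp add: colour_def)

lemma colour_le_5D:
  assumes "1 \<le> colour e" "colour e \<le> 5"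
  shows "low_edge e \<and> meets_low_edge e \<and> colour e = low_colour e"
proof -
  have "\<not> anchor_edge e" using assms colour_anchor_edge_ge_7 by force
  then show ?thesis using assms by (auto simp: colour_def split: if_splits)
qed

lemma colour_eq_anchor_colourE:
  assumes "member t y" "colour e = anchor_colour t y"
  obtains x where "member t x" "e = {x, anchor t x}" "anchor_colour t x = anchor_colour t y"
proof -
  have "anchor_edge e"
    using assms anchor_colour_bounds[OF assms(1)] colour_not_anchor_edge by fastforce
  then obtain t' x where x: "member t' x" "e = {x, anchor t' x}" by (auto simp: anchor_edge_def)
  then have "anchor_colour t' x = anchor_colour t y" using assms(2) colour_anchor_edge by simp
  then show ?thesis
    using that x anchor_colour_determines_family[OF x(1) assms(1)] by blast
qed

lemma colour_less: "colour e < 3 * M + 8"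
proof (cases "anchor_edge e")
  case True
  then obtain t x where "member t x" "e = {x, anchor t x}" by (auto simp: anchor_edge_def)
  then show ?thesis using colour_anchor_edge anchor_colour_bounds by simp
qed (use colour_not_anchor_edge in fastforce)

lemma satisfied_by_family:
  assumes y: "y \<in> V" and t: "separates t (f y) (f x)"
  shows "satisfied E colour {x, y}"
proof -
  have my: "member t y" and nx: "\<not> in_family t (f x)" and bx: "f x \<noteq> base t"
    using t y by (auto simp: separates_def member_def)
  let ?a = "anchor t y"
  have a: "{y, ?a} \<in> E" "f ?a = base t" using anchor_spec[OF my] by auto
  have "?a \<noteq> y" using f_anchor_less[OF my] by auto
  moreover have "?a \<noteq> x" using a(2) bx by auto
  ultimately have ne: "{y, ?a} \<noteq> {x, y}" by (auto simp: doubleton_eq_iff)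
  show ?thesis
  proof (rule satisfiedI[OF a(1) _ ne])
    fix e' assume e': "e' \<inter> {x, y} \<noteq> {}" "e' \<noteq> {y, ?a}"
    show "colour e' \<noteq> colour {y, ?a}"
    proof
      assume "colour e' = colour {y, ?a}"
      then obtain z where z: "member t z" "e' = {z, anchor t z}"
        using colour_eq_anchor_colourE[OF my] colour_anchor_edge[OF my] by metis
      have "f (anchor t z) = base t" using anchor_spec[OF z(1)] by simp
      then show False
        using e' z nx bx my base_not_in_family[of t] by (auto simp: member_def)
    qed
  qed auto
qed

lemma satisfied_by_designated:
  assumes a: "\<exists>x. member t x \<and> anchor t x = a" and t: "t = Bit 0 \<or> (\<exists>j. t = Spike j)"
    and ab: "f a \<le> 1" "f b \<le> 1" "f b \<noteq> base t"
  shows "satisfied E colour {a, b}"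
proof -
  let ?d = "designated t a"
  have d: "member t ?d" "anchor t ?d = a"
    using someI_ex[OF a] unfolding designated_def by auto
  have dE: "{?d, a} \<in> E" using anchor_spec[OF d(1)] d(2) by simp
  have "?d \<notin> {a, b}" using member_imp_ge_2[OF d(1)] ab by auto
  then have ne: "{?d, a} \<noteq> {a, b}" by auto
  show ?thesis
  proof (rule satisfiedI[OF dE _ ne])
    fix e' assume e': "e' \<inter> {a, b} \<noteq> {}" "e' \<noteq> {?d, a}"
    show "colour e' \<noteq> colour {?d, a}"
    proof
      assume "colour e' = colour {?d, a}"
      then obtain x where x: "member t x" "e' = {x, anchor t x}"
        "anchor_colour t x = anchor_colour t ?d"
        using colour_eq_anchor_colourE[OF d(1)] colour_anchor_edge[OF d(1)] d(2) by metis
      have "x = designated t (anchor t x)"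
        using anchor_colour_eq_designated[OF x(1) d(1) x(3)] d(2) t by simp
      moreover have "x \<notin> {a, b}" using member_imp_ge_2[OF x(1)] ab by auto
      moreover have "f (anchor t x) = base t" using anchor_spec[OF x(1)] by simp
      ultimately show False using e' x ab(3) by auto
    qed
  qed auto
qed

lemma hook_exists:
  assumes uv: "low_adj u v" "f u = 0" and lone: "\<not> meets_low_edge {u, v}"
    and ni: "\<not> isolated_edge E {u, v}"
    and no_Bit: "\<nexists>x. member (Bit 0) x \<and> anchor (Bit 0) x = u"
    and no_Spike: "\<nexists>j x. member (Spike j) x \<and> anchor (Spike j) x = v"
  shows "\<exists>h. hook_for {u, v} h"
proof -
  have fv: "f v = 1" using uv by (simp add: low_adj_def)
  obtain h where h: "h \<in> E" "h \<inter> {u, v} \<noteq> {}" "h \<noteq> {u, v}"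
    using ni by (auto simp: isolated_edge_def open_edge_nbhd_def closed_edge_nbhd_def)
  obtain a b where ab: "a \<noteq> b" "h = {a, b}" using graph_edgeE[OF graph h(1)] by metis
  then have "\<not> (a \<in> {u, v} \<and> b \<in> {u, v})" "a \<in> {u, v} \<or> b \<in> {u, v}"
    using h(2,3) by auto
  then obtain p w where pw: "h = {p, w}" "p \<in> {u, v}" "w \<notin> {u, v}"
    using ab(2) by (metis insert_commute)
  have "f p \<le> 1" using pw(2) uv fv by auto
  moreover have "\<not> low_adj p w"
  proof
    assume "low_adj p w"
    then have "low_edge h" using pw(1) low_edge_low_adj by simp
    then show False using lone h(2,3) meets_low_edgeI[of h "{u, v}"] by auto
  qed
  ultimately have w: "2 \<le> f w"
    using proper[of p w] h(1) pw(1) by (auto simp: low_adj_def)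
  have "\<not> anchor_edge h"
  proof
    assume "anchor_edge h"
    then obtain t x where x: "member t x" "h = {x, anchor t x}" by (auto simp: anchor_edge_def)
    then have "x = w" "anchor t x = p"
      using member_imp_ge_2[of t x] \<open>f p \<le> 1\<close> pw(1) by (auto simp: doubleton_eq_iff)
    then have "f p = base t" using anchor_spec[OF x(1)] by simp
    then show False
      using pw(2) uv(2) fv no_Bit no_Spike x(1) \<open>anchor t x = p\<close>
      by (cases t) (auto split: if_splits)
  qed
  then show ?thesis using h(1) pw w by (auto simp: hook_for_def)
qed

lemma satisfied_by_hook:
  assumes uv: "low_adj u v" and lone: "\<not> meets_low_edge {u, v}" and h: "hook_for {u, v} h"
  shows "satisfied E colour {u, v}"
proof -
  let ?h = "hook {u, v}"
  have "hook_for {u, v} ?h" unfolding hook_def using h by (rule someI)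
  then obtain p w where hw: "?h \<in> E" "\<not> anchor_edge ?h" "p \<in> {u, v}" "?h = {p, w}" "2 \<le> f w"
    by (auto simp: hook_for_def)
  have "is_hook ?h"
    using uv lone \<open>hook_for {u, v} ?h\<close> low_edge_low_adj by (auto simp: is_hook_def)
  moreover have "\<not> low_edge ?h"
    using hw(4,5) by (auto simp: low_edge_def low_adj_def doubleton_eq_iff)
  ultimately have c: "colour ?h = 6" using hw(2) by (simp add: colour_def)
  have w: "w \<notin> {u, v}" using hw(5) low_adjD[OF uv] by auto
  show ?thesis
  proof (rule satisfiedI[OF hw(1)])
    show "?h \<inter> {u, v} \<noteq> {}" "?h \<noteq> {u, v}" using hw(3,4) w by auto
  next
    fix e' assume e': "e' \<inter> {u, v} \<noteq> {}" "e' \<noteq> ?h"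
    show "colour e' \<noteq> colour ?h"
    proof
      assume "colour e' = colour ?h"
      then have "\<not> anchor_edge e'" "\<not> (low_edge e' \<and> meets_low_edge e')"
        using c colour_anchor_edge_ge_7[of e'] colour_linked[of e'] low_colour_le_5[of e'] by auto
      then have "is_hook e'" using \<open>colour e' = colour ?h\<close> c by (simp add: colour_def split: if_splits)
      then obtain e1 p' w' where e1: "low_edge e1" "\<not> meets_low_edge e1" "e' = hook e1"
        "p' \<in> e1" "e' = {p', w'}" "2 \<le> f w'"
        by (auto simp: is_hook_def hook_for_def)
      have "w' \<notin> {u, v}" using e1(6) low_adjD[OF uv] by auto
      then have "e1 \<inter> {u, v} \<noteq> {}" using e'(1) e1(4,5) by auto
      then have "e1 = {u, v}" using lone meets_low_edgeI[OF e1(1), of "{u, v}"] by auto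
      then show False using e1(3) e'(2) by simp
    qed
  qed
qed

lemma satisfied_lone_low_edge:
  assumes uv: "low_adj u v" "f u = 0" and lone: "\<not> meets_low_edge {u, v}"
    and ni: "\<not> isolated_edge E {u, v}"
  shows "satisfied E colour {u, v}"
proof -
  have fv: "f v = 1" using uv by (simp add: low_adj_def)
  consider (Bit) "\<exists>x. member (Bit 0) x \<and> anchor (Bit 0) x = u"
    | (Spike) j where "\<exists>x. member (Spike j) x \<and> anchor (Spike j) x = v"
    | (hook) "\<nexists>x. member (Bit 0) x \<and> anchor (Bit 0) x = u"
        "\<nexists>j x. member (Spike j) x \<and> anchor (Spike j) x = v"
    by blast
  then show ?thesis
  proof cases
    case Bit
    then show ?thesis using satisfied_by_designated uv(2) fv by simp
  next
    case Spike
    then have "satisfied E colour {v, u}" using satisfied_by_designated uv(2) fv by simp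
    then show ?thesis by (simp add: insert_commute)
  next
    case hook
    then show ?thesis using hook_exists[OF uv lone ni] satisfied_by_hook uv(1) lone by blast
  qed
qed

lemma satisfied_by_special_edge:
  assumes xy: "low_adj x y" and w: "low_edge w" "w \<inter> {x, y} \<noteq> {}" "w \<noteq> {x, y}"
    and special: "low_colour w \<in> {4, 5}"
  shows "satisfied E colour {x, y}"
proof -
  have "w \<in> E" using w(1) low_adjD by (auto simp: low_edge_def)
  have "meets_low_edge w"
    using meets_low_edgeI[OF low_edge_low_adj[OF xy]] w(2,3) by (auto simp: Int_commute)
  then have cw: "colour w = low_colour w" using colour_linked[OF w(1)] by simp
  show ?thesis
  proof (rule satisfiedI[OF \<open>w \<in> E\<close> w(2,3)])
    fix e' assume e': "e' \<inter> {x, y} \<noteq> {}" "e' \<noteq> w"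
    show "colour e' \<noteq> colour w"
    proof
      assume c: "colour e' = colour w"
      then have e'_low: "low_edge e'" "colour e' = low_colour e'"
        using colour_le_5D[of e'] cw special by auto
      have "edge_root e' = edge_root w"
        using edge_root_meeting[OF e'_low(1) xy e'(1)] edge_root_meeting[OF w(1) xy w(2)] by simp
      then show False using low_colour_special_eq[OF special] c cw e'_low(2) e'(2) by simp
    qed
  qed
qed

lemma satisfied_by_parent_edge:
  assumes xy: "low_adj x y" "low.depth y = Suc (low.depth x)" and x: "0 < low.depth x"
    and p: "low_colour {low.parent x, x} \<notin> {4, 5}"
  shows "satisfied E colour {x, y}"
proof -
  let ?p = "{low.parent x, x}"
  have px: "low_adj (low.parent x) x" "Suc (low.depth (low.parent x)) = low.depth x"
    using low.parent_spec[OF x] by auto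
  have "?p \<noteq> {x, y}" using px(2) xy(2) low_adjD[OF px(1)] by (auto simp: doubleton_eq_iff)
  then have "meets_low_edge ?p" using meets_low_edgeI[OF low_edge_low_adj[OF xy(1)]] by auto
  then have colour_p: "colour ?p = 1 + low.depth x mod 3"
    using colour_linked[OF low_edge_low_adj[OF px(1)]] low_colour_parent_edge[OF x p] by simp
  show ?thesis
  proof (rule satisfiedI[of ?p])
    show "?p \<in> E" "?p \<inter> {x, y} \<noteq> {}" "?p \<noteq> {x, y}"
      using low_adjD[OF px(1)] \<open>?p \<noteq> {x, y}\<close> by auto
  next
    fix e' assume e': "e' \<inter> {x, y} \<noteq> {}" "e' \<noteq> ?p"
    show "colour e' \<noteq> colour ?p"
    proof
      assume c: "colour e' = colour ?p"
      moreover have "low.depth x mod 3 < 3" by simp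
      ultimately have "1 \<le> colour e'" "colour e' \<le> 3" using colour_p by linarith+
      then have "colour e' = low_colour e'" using colour_le_5D[of e'] by simp
      then obtain w where w: "0 < low.depth w" "e' = {low.parent w, w}"
        "low.depth w mod 3 = low.depth x mod 3"
        using low_colour_tree_edge \<open>1 \<le> colour e'\<close> \<open>colour e' \<le> 3\<close> c colour_p
        by (metis add_left_cancel)
      have "low.depth (low.parent w) + 1 = low.depth w" using low.parent_spec[OF w(1)] by simp
      \<comment> \<open>the other tree edges at \<open>x\<close> and \<open>y\<close> end at depth \<open>depth x + 1\<close> or \<open>depth x + 2\<close>\<close>
      then show False using w e' xy(2) by (auto; presburger)
    qed
  qed
qed

lemma satisfied_linked_nonroot:
  assumes xy: "low_adj x y" "low.depth y = Suc (low.depth x)" and x: "0 < low.depth x"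
  shows "satisfied E colour {x, y}"
proof (cases "low_colour {low.parent x, x} \<in> {4, 5}")
  case True
  have p: "low_adj (low.parent x) x" "Suc (low.depth (low.parent x)) = low.depth x"
    using low.parent_spec[OF x] by auto
  then have "{low.parent x, x} \<noteq> {x, y}"
    using xy(2) low_adjD[OF p(1)] by (auto simp: doubleton_eq_iff)
  then show ?thesis using satisfied_by_special_edge[OF xy(1) low_edge_low_adj[OF p(1)]] True
    by auto
qed (use satisfied_by_parent_edge[OF xy x] in blast)

lemma satisfied_linked_root:
  assumes xy: "low_adj x y" and x: "low.depth x = 0" and linked: "meets_low_edge {x, y}"
  shows "satisfied E colour {x, y}"
proof -
  have r: "low.root x = x" using x low.depth_eq_0_iff by simp
  let ?s = "SOME y. low_adj x y"
  have s: "low_adj x ?s" using xy by (rule someI)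
  have first: "first_edge x = {x, ?s}" by (simp add: first_edge_def)
  have root_first: "edge_root (first_edge x) = x" using edge_root_low_adj[OF s] r first by simp
  show ?thesis
  proof (cases "{x, y} = first_edge x")
    case False
    have "low_colour (first_edge x) = 4" using root_first by (simp add: low_colour_def)
    then show ?thesis
      using satisfied_by_special_edge[OF xy low_edge_low_adj[OF s]] False first by auto
  next
    case True
    let ?e = "second_edge x"
    have "\<exists>e. low_edge e \<and> e \<noteq> first_edge x \<and> e \<inter> first_edge x \<noteq> {}"
      using linked True by (auto simp: meets_low_edge_def)
    then have e: "low_edge ?e" "?e \<noteq> {x, y}" "?e \<inter> {x, y} \<noteq> {}"
      unfolding second_edge_def using someI_ex True by (metis (mono_tags, lifting))+
    then have "edge_root ?e = x" using edge_root_meeting[OF e(1) xy] r by simp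
    then have "low_colour ?e = 5" using e(2) True by (simp add: low_colour_def)
    then show ?thesis using satisfied_by_special_edge[OF xy e(1) e(3,2)] by simp
  qed
qed

lemma satisfied_low_edge:
  assumes xy: "low_adj x y" and ni: "\<not> isolated_edge E {x, y}"
  shows "satisfied E colour {x, y}"
proof (cases "meets_low_edge {x, y}")
  case True
  have linked: "satisfied E colour {u, v}"
    if "low_adj u v" "low.depth v = Suc (low.depth u)" "meets_low_edge {u, v}" for u v
    using satisfied_linked_nonroot satisfied_linked_root that by (cases "low.depth u = 0") auto
  from low_depth_adj[OF xy] show ?thesis
  proof
    assume "low.depth x = Suc (low.depth y)"
    then show ?thesis
      using linked[of y x] low_adj_sym[OF xy] True by (simp add: insert_commute)
  qed (use linked xy True in blast)
next
  case False
  have "f x = 0 \<or> f y = 0" using xy by (auto simp: low_adj_def)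
  then show ?thesis
    using satisfied_lone_low_edge[of x y] satisfied_lone_low_edge[of y x] low_adj_sym[OF xy]
      xy False ni by (auto simp: insert_commute)
qed

lemma conflict_free_colour: "conflict_free E colour"
  unfolding conflict_free_def
proof (intro ballI impI)
  fix e assume e: "e \<in> E" "\<not> isolated_edge E e"
  then obtain a b where ab: "a \<in> V" "b \<in> V" "e = {a, b}" by (metis graph_edgeE graph)
  have "f a \<noteq> f b" using proper e(1) ab(3) by simp
  show "satisfied E colour e"
  proof (cases "2 \<le> f a \<or> 2 \<le> f b")
    case True
    have separated: "satisfied E colour e"
      if "e = {x, y}" "x \<in> V" "y \<in> V" "f x \<noteq> f y" "2 \<le> f y" for x y
      using separating_family[OF that(4,5)] satisfied_by_family that by (metis insert_commute)
    then show ?thesis using True ab \<open>f a \<noteq> f b\<close> by (metis insert_commute)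
  next
    case False
    then have "low_adj a b" using e(1) ab(3) \<open>f a \<noteq> f b\<close> by (auto simp: low_adj_def)
    then show ?thesis using satisfied_low_edge e(2) ab(3) by simp
  qed
qed

end

section \<open>Conflict-free chromatic indices\<close>

lemma le_two_pow_nat_ceiling_log: "k \<le> 2 ^ nat \<lceil>log 2 (real k)\<rceil>"
proof (cases "k = 0")
  case False
  then have "real k = 2 powr log 2 (real k)" by simp
  also have "\<dots> \<le> 2 powr real (nat \<lceil>log 2 (real k)\<rceil>)"
    by (intro powr_mono real_nat_ceiling_ge) simp
  also have "\<dots> = real (2 ^ nat \<lceil>log 2 (real k)\<rceil>)" by (simp add: powr_realpow)
  finally show ?thesis by (simp only: of_nat_le_iff)
qed simp

lemma chromatic_number_pos:
  assumes "graph V E" "V \<noteq> {}"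
  shows "0 < chromatic_number V E"
  using colouring_chromatic_number[OF assms(1)] assms(2) by (force simp: colouring_def)

lemma conflict_free_colouring_exists:
  assumes "graph V E"
  shows "\<exists>c. conflict_free E c \<and> (\<forall>e\<in>E. c e < 3 * nat \<lceil>log 2 (chromatic_number V E)\<rceil> + 8)"
proof -
  define M where "M = nat \<lceil>log 2 (chromatic_number V E)\<rceil>"
  obtain f where f: "colouring V E (chromatic_number V E) f"
    and grundy: "\<forall>v\<in>V. \<forall>h < f v. \<exists>w. {v, w} \<in> E \<and> f w = h"
    using grundy_colouring_exists[OF assms] by blast
  have "\<And>v. v \<in> V \<Longrightarrow> f v < 2 ^ M"
    using f le_two_pow_nat_ceiling_log[of "chromatic_number V E"]
    by (fastforce simp: colouring_def M_def)
  then interpret grundy_colouring V E f M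
    using assms f grundy by unfold_locales (auto simp: colouring_def)
  show ?thesis using conflict_free_colour colour_less unfolding M_def by blast
qed

lemma chi_cf_le:
  assumes "conflict_free E c" "\<forall>e\<in>E. c e < k"
  shows "chi_cf E \<le> k"
  unfolding chi_cf_def using assms by (intro Least_le) blast

lemma chi_ocf_le_chi_cf:
  assumes "conflict_free E c" "\<forall>e\<in>E. c e < k"
  shows "chi_ocf E \<le> chi_cf E"
proof -
  obtain c' where "\<forall>e\<in>E. c' e < chi_cf E" "conflict_free E c'"
    using LeastI_ex[of "\<lambda>k. \<exists>c. (\<forall>e\<in>E. c e < k) \<and> conflict_free E c"] assms
    unfolding chi_cf_def by blast
  then show ?thesis
    unfolding chi_ocf_def by (intro Least_le) (blast intro: conflict_free_imp_open_conflict_free)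
qed

theorem mainTheorem11:
  fixes V :: "'a set" and E :: "'a set set"
  assumes "graph V E" and "V \<noteq> {}"
  shows "chi_ocf E \<le> chi_cf E
    \<and> real (chi_cf E) \<le> 3 * of_int \<lceil>log 2 (real (chromatic_number V E))\<rceil> + 17
    \<and> 3 * of_int \<lceil>log 2 (real (chromatic_number V E))\<rceil> + 17
        < 3 * log 2 (real (chromatic_number V E)) + (20::real)"
proof -
  define x where "x = log 2 (real (chromatic_number V E))"
  obtain c where c: "conflict_free E c" "\<forall>e\<in>E. c e < 3 * nat \<lceil>x\<rceil> + 8"
    using conflict_free_colouring_exists[OF assms(1)] unfolding x_def by blast
  have "0 \<le> x" using chromatic_number_pos[OF assms] by (simp add: x_def)
  then have "real (nat \<lceil>x\<rceil>) = of_int \<lceil>x\<rceil>" by simp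
  moreover have "real (chi_cf E) \<le> real (3 * nat \<lceil>x\<rceil> + 8)"
    using chi_cf_le[OF c] by (simp only: of_nat_le_iff)
  ultimately have "real (chi_cf E) \<le> 3 * of_int \<lceil>x\<rceil> + 8" by simp
  moreover have "of_int \<lceil>x\<rceil> < x + 1" using ceiling_correct[of x] by linarith
  ultimately show ?thesis using chi_ocf_le_chi_cf[OF c] unfolding x_def by linarith
qed

end
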